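(* Let $h\ge1$ and let $P(u)=\sum_{s\in\mathcal{S}}p_su^s$ be the step polynomial of a finite step set $\mathcal{S}\subset\mathbb{Z}$ with weights $p_s>0$, which is symmetric, i.e. $P(u)=P(1/u)$, and satisfies $\max\mathcal{S}=h$. For $k\ge1$ let $G_{0,k}(z)$ be the generating function (by length, counted with weight = product of step weights) of positive walks from the origin to altitude $k$, i.e. walks $0=y_0,\dots,y_n=k$ with steps in $\mathcal{S}$ and $y_i\ge1$ for $1\le i\le n$, and let $M_{>0}(z)$ be the generating function of positive meanders, i.e. walks $0=y_0,\dots,y_n$ with steps in $\mathcal{S}$ and $y_i\ge1$ for $1\le i\le n$ (ending anywhere; including the empty walk). Let $u_1(z),\dots,u_h(z)$ be the small roots of $1-zP(u)=0$, i.e. the $h$ roots (Puiseux series in $z$) with $\lim_{z\to0}u_i(z)=0$. Then $$M_{>0}(z)=1+\sum_{k\ge1}G_{0,k}(z)=\prod_{i=1}^h\frac{1}{1-u_i(z)},\qquad G_{0,k}(z)=h_k\big(u_1(z),\dots,u_h(z)\big)\quad(k\ge1),$$ where $h_k(x_1,\dots,x_h)=\sum_{i_1+\dots+i_h=k,\ i_1,\dots,i_h\ge0}x_1^{i_1}\cdots x_h^{i_h}$ is the complete homogeneous symmetric polynomial of degree $k$. *)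

theory Defs
  imports "HOL-Analysis.Analysis" "HOL-Computational_Algebra.Polynomial"
begin

definition stepP :: "int set \<Rightarrow> (int \<Rightarrow> real) \<Rightarrow> complex \<Rightarrow> complex" where
  "stepP S p u = (\<Sum>s\<in>S. complex_of_real (p s) * u powi s)"

text \<open>A walk from the origin is the list of its steps; its altitude after i steps is the
  i-th partial sum. It is positive if all altitudes y_1,...,y_n are at least 1.\<close>
definition positive_walk :: "int list \<Rightarrow> bool" where
  "positive_walk ws \<longleftrightarrow> (\<forall>i\<in>{1..length ws}. sum_list (take i ws) \<ge> 1)"

definition walk_weight :: "(int \<Rightarrow> real) \<Rightarrow> int list \<Rightarrow> real" where
  "walk_weight p ws = prod_list (map p ws)"

definition G_coeff :: "int set \<Rightarrow> (int \<Rightarrow> real) \<Rightarrow> int \<Rightarrow> nat \<Rightarrow> real" where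
  "G_coeff S p k n = (\<Sum>ws\<in>{ws. set ws \<subseteq> S \<and> length ws = n \<and> positive_walk ws \<and> sum_list ws = k}.
       walk_weight p ws)"

definition M_coeff :: "int set \<Rightarrow> (int \<Rightarrow> real) \<Rightarrow> nat \<Rightarrow> real" where
  "M_coeff S p n = (\<Sum>ws\<in>{ws. set ws \<subseteq> S \<and> length ws = n \<and> positive_walk ws}. walk_weight p ws)"

definition Gf :: "int set \<Rightarrow> (int \<Rightarrow> real) \<Rightarrow> int \<Rightarrow> complex \<Rightarrow> complex" where
  "Gf S p k z = (\<Sum>n. complex_of_real (G_coeff S p k n) * z ^ n)"

definition Mf :: "int set \<Rightarrow> (int \<Rightarrow> real) \<Rightarrow> complex \<Rightarrow> complex" where
  "Mf S p z = (\<Sum>n. complex_of_real (M_coeff S p n) * z ^ n)"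

text \<open>The kernel polynomial u^h (1 - z P(u)) in u (h = max S), a genuine polynomial of
  degree 2h whose nonzero roots are the roots of 1 - z P(u) = 0.\<close>
definition kernel_poly :: "int set \<Rightarrow> (int \<Rightarrow> real) \<Rightarrow> complex \<Rightarrow> complex poly" where
  "kernel_poly S p z = monom 1 (nat (Max S)) -
     smult z (\<Sum>s\<in>S. monom (complex_of_real (p s)) (nat (s + Max S)))"

definition roots_in_disk :: "int set \<Rightarrow> (int \<Rightarrow> real) \<Rightarrow> real \<Rightarrow> complex \<Rightarrow> complex multiset" where
  "roots_in_disk S p r z = filter_mset (\<lambda>u. cmod u < r) (proots (kernel_poly S p z))"

definition hcomplete :: "nat \<Rightarrow> complex list \<Rightarrow> complex" where
  "hcomplete k xs = (\<Sum>e\<in>{e :: nat list. length e = length xs \<and> sum_list e = k}.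
       \<Prod>j<length xs. (xs ! j) ^ (e ! j))"

end

(*
  Let F(x) = sum_k G_{0,k}(z) x^k. Decomposing a positive walk to altitude
  k >= 1 by its last step gives G_{0,k} = z sum_s p_s G_{0,k-s}, i.e. all coefficients of
  K(x) F(x) beyond x^h vanish, where K(x) = x^h (1 - z P(x)) is the kernel polynomial of
  degree 2h. By the symmetry P(u) = P(1/u), K is self-reciprocal, so its roots are closed under
  inversion; for small z none lies near the unit circle, hence K = c Q Q* with
  Q = prod_i (x - u_i) over the h small roots and Q* = prod_i (1 - u_i x) its reflection.
  The series H(x) = prod_i 1/(1 - u_i x) = sum_k h_k(u) x^k satisfies K H = c Q, so
  K (F - H) is a polynomial of degree <= h vanishing at 0. Both series converge on the unit
  disk, which contains the u_i, so Q divides this polynomial, which therefore is 0: F = H.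
  Evaluating at x = 1 gives M_{>0} = prod_i 1/(1 - u_i).
*)

theory Submission
  imports Defs "HOL-Computational_Algebra.Fundamental_Theorem_Algebra"
begin

section \<open>Double series\<close>

lemma sums_swap:
  fixes f :: "nat \<Rightarrow> nat \<Rightarrow> 'a::banach"
  assumes rows_abs: "\<And>n. summable (\<lambda>k. norm (f n k))"
    and total_abs: "summable (\<lambda>n. \<Sum>k. norm (f n k))"
    and rows: "\<And>n. (\<lambda>k. f n k) sums a n"
    and cols: "\<And>k. (\<lambda>n. f n k) sums b k"
  shows "b sums suminf a"
proof -
  define g where "g = (\<lambda>(n, k). f n k)"
  define g' where "g' = (\<lambda>(k, n). f n k)"
  have row_norms: "((\<lambda>k. norm (f n k)) has_sum (\<Sum>k. norm (f n k))) UNIV" for n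
    using rows_abs[of n] by (intro norm_summable_imp_has_sum) (auto simp: summable_sums)
  have abs: "(\<lambda>x. norm (g x)) summable_on UNIV \<times> UNIV"
  proof (rule Infinite_Sum.abs_summable_on_Sigma_iff[THEN iffD2], intro conjI ballI)
    show "(\<lambda>k. norm (g (n, k))) summable_on UNIV" for n
      using row_norms[of n] by (auto simp: g_def summable_on_def)
    show "(\<lambda>n. norm (infsum (\<lambda>k. norm (g (n, k))) UNIV)) summable_on UNIV"
      using total_abs row_norms[THEN infsumI] suminf_nonneg[OF rows_abs]
      by (auto simp: g_def intro!: norm_summable_imp_summable_on)
  qed
  then obtain t where t: "(g has_sum t) (UNIV \<times> UNIV)"
    using Infinite_Sum.abs_summable_summable summable_on_def by blast
  have "(a has_sum t) UNIV"
    by (rule has_sum_SigmaD[OF t]) (use rows rows_abs norm_summable_imp_has_sum in \<open>auto simp: g_def\<close>)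
  then have "suminf a = t"
    using has_sum_imp_sums sums_unique by blast
  have swapped: "(g' has_sum t) (UNIV \<times> UNIV)"
    using t unfolding g_def g'_def by (subst (asm) has_sum_swap) simp
  have "(\<lambda>x. norm (g' x)) summable_on UNIV \<times> UNIV"
    using abs unfolding g_def g'_def by (subst (asm) summable_on_swap) (simp add: case_prod_unfold)
  then have "summable (\<lambda>n. norm (f n k))" for k
    by (subst (asm) Infinite_Sum.abs_summable_on_Sigma_iff) (auto simp: g'_def intro: summable_on_imp_summable)
  then have "(b has_sum t) UNIV"
    by (intro has_sum_SigmaD[OF swapped]) (auto simp: g'_def intro: norm_summable_imp_has_sum cols)
  then show ?thesis
    using \<open>suminf a = t\<close> has_sum_imp_sums by blast
qed

section \<open>Roots of polynomials and their reflections\<close>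

lemma poly_eqI_nonzero:
  fixes p q :: "'a::{idom, ring_char_0} poly"
  assumes "\<And>x. x \<noteq> 0 \<Longrightarrow> poly p x = poly q x"
  shows "p = q"
proof (rule ccontr)
  assume "p \<noteq> q"
  then have "finite {x. poly (p - q) x = 0}"
    by (intro poly_roots_finite) simp
  moreover have "UNIV - {0} \<subseteq> {x. poly (p - q) x = 0}"
    using assms by auto
  ultimately have "finite (UNIV - {0 :: 'a})"
    by (rule finite_subset[rotated])
  then show False
    by (simp add: infinite_UNIV_char_0)
qed

lemma reflect_poly_linear: "reflect_poly [:a, 1:] = [:1, a :: 'a::comm_ring_1:]"
  by (rule poly_eqI) (auto simp: coeff_reflect_poly coeff_pCons split: nat.split)

lemma proots_linear_prod: "proots (\<Prod>x\<leftarrow>xs. [:-x, 1:]) = mset (xs :: 'a::idom list)"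
  using proots_prod_list[of "map (\<lambda>x. [:-x, 1:]) xs"] by (simp add: o_def image_iff)

lemma degree_linear_prod: "degree (\<Prod>a\<leftarrow>as. [:-a, 1:]) = length (as :: 'a::idom list)"
  by (induction as) (simp_all add: degree_mult_eq prod_list_zero_iff image_iff del: mult_pCons_left)

lemma reflect_poly_linear_prod:
  fixes xs :: "'a::field list"
  assumes "0 \<notin> set xs"
  shows "reflect_poly (\<Prod>x\<leftarrow>xs. [:-x, 1:]) = smult (\<Prod>x\<leftarrow>xs. -x) (\<Prod>x\<leftarrow>xs. [:-inverse x, 1:])"
  using assms
proof (induction xs)
  case (Cons a xs)
  have "reflect_poly [:-a, 1:] = smult (-a) [:-inverse a, 1:]"
    using Cons.prems by (simp add: reflect_poly_linear)
  moreover have "reflect_poly (\<Prod>x\<leftarrow>a # xs. [:-x, 1:]) =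
      reflect_poly [:-a, 1:] * reflect_poly (\<Prod>x\<leftarrow>xs. [:-x, 1:])"
    by (simp only: list.map prod_list.Cons reflect_poly_mult)
  moreover have "reflect_poly (\<Prod>x\<leftarrow>xs. [:-x, 1:]) = smult (\<Prod>x\<leftarrow>xs. -x) (\<Prod>x\<leftarrow>xs. [:-inverse x, 1:])"
    using Cons by simp
  ultimately show ?case
    by (simp only: list.map prod_list.Cons mult_smult_left mult_smult_right smult_smult mult.commute)
qed simp

lemma proots_reflect_poly:
  fixes p :: "complex poly"
  assumes "poly p 0 \<noteq> 0"
  shows "proots (reflect_poly p) = image_mset inverse (proots p)"
proof -
  obtain xs where xs: "mset xs = proots p"
    using ex_mset by blast
  have "p \<noteq> 0"
    using assms by auto
  then have "0 \<notin> set xs"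
    using assms by (simp flip: set_mset_mset add: xs)
  have "p = smult (lead_coeff p) (\<Prod>x\<leftarrow>xs. [:-x, 1:])"
    using complex_poly_decompose_multiset[of p]
    by (simp add: prod_mset_prod_list flip: xs mset_map)
  then have "reflect_poly p = smult (lead_coeff p * (\<Prod>x\<leftarrow>xs. -x)) (\<Prod>x\<leftarrow>xs. [:-inverse x, 1:])"
    using reflect_poly_linear_prod[OF \<open>0 \<notin> set xs\<close>] by (metis reflect_poly_smult smult_smult)
  moreover have "lead_coeff p * (\<Prod>x\<leftarrow>xs. -x) \<noteq> 0"
    using \<open>p \<noteq> 0\<close> \<open>0 \<notin> set xs\<close> by (auto simp: prod_list_zero_iff)
  moreover have "proots (\<Prod>x\<leftarrow>xs. [:-inverse x, 1:]) = image_mset inverse (mset xs)"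
    using proots_linear_prod[of "map inverse xs"] by (simp add: o_def)
  ultimately show ?thesis
    by (simp add: xs)
qed

lemma complex_poly_eq_smult_if_proots_eq:
  fixes p q :: "complex poly"
  assumes "q \<noteq> 0" "proots p = proots q"
  shows "p = smult (lead_coeff p / lead_coeff q) q"
proof -
  have "smult (lead_coeff p / lead_coeff q) q =
      smult (lead_coeff p / lead_coeff q * lead_coeff q) (\<Prod>x\<in>#proots q. [:-x, 1:])"
    by (subst (1) complex_poly_decompose_multiset[of q, symmetric]) simp
  also have "\<dots> = p"
    using assms complex_poly_decompose_multiset[of p] by simp
  finally show ?thesis ..
qed

lemma inverse_closed_mset_split:
  fixes X :: "complex multiset" and r :: real
  defines "A \<equiv> filter_mset (\<lambda>x. norm x < r) X"
  assumes inv: "image_mset inverse X = X" and "0 \<notin># X" and "0 < r" "r \<le> 1"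
    and gap: "\<forall>x\<in>#X. norm x < r \<or> 1 / r < norm x"
  shows "X = A + image_mset inverse A"
proof -
  define B where "B = filter_mset (\<lambda>x. \<not> norm x < r) X"
  have "filter_mset (\<lambda>x. norm (inverse x) < r) X = B"
    unfolding B_def
  proof (rule filter_mset_cong[OF refl])
    fix x assume "x \<in># X"
    then have "x \<noteq> 0" and x: "norm x < r \<or> 1 < r * norm x"
      using gap \<open>0 \<notin># X\<close> \<open>0 < r\<close> by (auto simp: field_simps)
    have "r * norm x < 1" if "norm x < r"
      using mult_strict_left_mono[OF that \<open>0 < r\<close>] mult_left_le_one_le[of r r] \<open>0 < r\<close> \<open>r \<le> 1\<close>
      by linarith
    moreover have "norm (inverse x) = 1 / norm x"
      by (metis norm_inverse inverse_eq_divide)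
    then have "norm (inverse x) < r \<longleftrightarrow> 1 < r * norm x"
      using \<open>x \<noteq> 0\<close> by (simp add: divide_less_eq mult.commute)
    ultimately show "norm (inverse x) < r \<longleftrightarrow> \<not> norm x < r"
      using x by auto
  qed
  then have "A = image_mset inverse B"
    unfolding A_def by (subst (1) inv[symmetric]) (simp add: filter_mset_image_mset)
  then have "image_mset inverse A = B"
    by (simp add: multiset.map_comp o_def)
  then show ?thesis
    unfolding A_def B_def by (simp add: multiset_partition[symmetric])
qed

lemma linear_prod_dvd_if_fps_factor:
  fixes R :: "complex poly" and W :: "complex fps"
  assumes "fps_of_poly R = fps_of_poly (\<Prod>a\<leftarrow>as. [:-a, 1:]) * W"
    and "\<forall>a\<in>set as. ereal (norm a) < fps_conv_radius W"
  shows "(\<Prod>a\<leftarrow>as. [:-a, 1:]) dvd R"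
  using assms
proof (induction as arbitrary: R)
  case (Cons a as)
  let ?Q = "\<Prod>a\<leftarrow>as. [:-a, 1:]"
  have "poly R a = eval_fps (fps_of_poly R) a"
    by simp
  also have "fps_of_poly R = fps_of_poly ([:-a, 1:] * ?Q) * W"
    using Cons.prems(1) by (simp only: list.map prod_list.Cons)
  also have "eval_fps \<dots> a = 0"
    using Cons.prems(2) by (subst eval_fps_mult) simp_all
  finally have "[:-a, 1:] dvd R"
    by (simp add: poly_eq_0_iff_dvd)
  then obtain R' where R: "R = [:-a, 1:] * R'" ..
  have "fps_of_poly [:-a, 1:] \<noteq> 0"
    using fps_of_poly_eq_iff[of "[:-a, 1:]" 0] by simp
  moreover have "fps_of_poly [:-a, 1:] * fps_of_poly R' = fps_of_poly [:-a, 1:] * (fps_of_poly ?Q * W)"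
    using Cons.prems(1) by (simp only: R fps_of_poly_mult list.map prod_list.Cons mult.assoc)
  ultimately have "fps_of_poly R' = fps_of_poly ?Q * W"
    by (rule mult_left_cancel[THEN iffD1])
  then have "?Q dvd R'"
    using Cons by simp
  then show ?case
    unfolding R list.map prod_list.Cons by (rule mult_dvd_mono[OF dvd_refl])
qed simp

lemma poly_eq_0_if_dvd_degree_le:
  fixes Q R :: "'a::idom poly"
  assumes "Q dvd R" "degree R \<le> degree Q" "poly R 0 = 0" "poly Q 0 \<noteq> 0"
  shows "R = 0"
proof (rule ccontr)
  assume "R \<noteq> 0"
  obtain T where T: "R = Q * T"
    using assms(1) by blast
  with \<open>R \<noteq> 0\<close> have "Q \<noteq> 0" "T \<noteq> 0"
    by auto
  then have "degree T = 0"
    using assms(2) by (simp add: T degree_mult_eq)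
  moreover have "poly T 0 = 0"
    using assms(3,4) by (simp add: T)
  ultimately have "T = 0"
    using poly_zero by blast
  with \<open>T \<noteq> 0\<close> show False ..
qed

section \<open>Complete homogeneous symmetric polynomials\<close>

lemma hcomplete_Nil: "hcomplete k [] = (if k = 0 then 1 else 0)"
proof -
  have "{e :: nat list. length e = 0 \<and> sum_list e = k} = (if k = 0 then {[]} else {})"
    by auto
  then show ?thesis
    by (simp add: hcomplete_def)
qed

lemma finite_lists_sum_list_eq: "finite {e :: nat list. length e = n \<and> sum_list e = m}"
  by (rule finite_subset[OF _ finite_lists_length_eq[of "{0..m}" n]])
     (use member_le_sum_list in fastforce)+

lemma hcomplete_Cons: "hcomplete k (x # xs) = (\<Sum>j\<le>k. x ^ j * hcomplete (k - j) xs)"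
proof -
  let ?E = "\<lambda>n m. {e :: nat list. length e = n \<and> sum_list e = m}"
  let ?n = "length xs"
  have E: "?E (Suc ?n) k = (\<lambda>(j, e). j # e) ` (SIGMA j:{..k}. ?E ?n (k - j))"
  proof (intro equalityI subsetI)
    fix e assume e: "e \<in> ?E (Suc ?n) k"
    then obtain j e' where "e = j # e'"
      by (cases e) auto
    with e show "e \<in> (\<lambda>(j, e). j # e) ` (SIGMA j:{..k}. ?E ?n (k - j))"
      by (auto intro!: image_eqI[of _ _ "(j, e')"])
  qed auto
  have "hcomplete k (x # xs) = (\<Sum>(j, e)\<in>(SIGMA j:{..k}. ?E ?n (k - j)).
          \<Prod>i<Suc ?n. ((x # xs) ! i) ^ ((j # e) ! i))"
    unfolding hcomplete_def length_Cons E
    by (subst sum.reindex) (auto simp: inj_on_def case_prod_unfold)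
  also have "\<dots> = (\<Sum>(j, e)\<in>(SIGMA j:{..k}. ?E ?n (k - j)). x ^ j * (\<Prod>i<?n. (xs ! i) ^ (e ! i)))"
    by (intro sum.cong refl) (auto simp del: prod.lessThan_Suc simp add: prod.lessThan_Suc_shift)
  also have "\<dots> = (\<Sum>j\<le>k. x ^ j * hcomplete (k - j) xs)"
    by (subst sum.Sigma[symmetric]) (auto simp: finite_lists_sum_list_eq hcomplete_def sum_distrib_left)
  finally show ?thesis .
qed

lemma hcomplete_0: "hcomplete 0 xs = 1"
  by (induction xs) (simp_all add: hcomplete_Nil hcomplete_Cons)

definition geometric_fps :: "'a::comm_ring_1 \<Rightarrow> 'a fps" where
  "geometric_fps x = Abs_fps (\<lambda>n. x ^ n)"

definition hcomplete_fps :: "complex list \<Rightarrow> complex fps" where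
  "hcomplete_fps xs = Abs_fps (\<lambda>k. hcomplete k xs)"

lemma hcomplete_fps_Nil: "hcomplete_fps [] = 1"
  by (rule fps_ext) (simp add: hcomplete_fps_def hcomplete_Nil)

lemma hcomplete_fps_Cons: "hcomplete_fps (x # xs) = geometric_fps x * hcomplete_fps xs"
  by (rule fps_ext)
     (simp add: hcomplete_fps_def hcomplete_Cons fps_mult_nth geometric_fps_def atLeast0AtMost)

lemma geometric_fps_0: "geometric_fps 0 = 1"
  by (rule fps_ext) (simp add: geometric_fps_def power_0_left)

lemma fps_of_poly_linear_times_geometric_fps: "fps_of_poly [:1, -x:] * geometric_fps x = 1"
proof (rule fps_ext)
  fix n
  have lin: "fps_of_poly [:1, -x:] = 1 - fps_const x * fps_X"
    by (rule fps_ext) (simp add: coeff_pCons fps_X_nth split: nat.split)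
  have "fps_of_poly [:1, -x:] * geometric_fps x = geometric_fps x - fps_const x * (fps_X * geometric_fps x)"
    unfolding lin by (simp add: algebra_simps)
  then show "fps_nth (fps_of_poly [:1, -x:] * geometric_fps x) n = fps_nth 1 n"
    by (cases n) (simp_all add: geometric_fps_def fps_X_mult_nth)
qed

lemma fps_of_poly_linear_prod_times_hcomplete_fps:
  "fps_of_poly (\<Prod>x\<leftarrow>xs. [:1, -x:]) * hcomplete_fps xs = 1"
proof (induction xs)
  case (Cons a xs)
  have "fps_of_poly (\<Prod>x\<leftarrow>a # xs. [:1, -x:]) * hcomplete_fps (a # xs) =
      (fps_of_poly [:1, -a:] * geometric_fps a) * (fps_of_poly (\<Prod>x\<leftarrow>xs. [:1, -x:]) * hcomplete_fps xs)"
    by (simp add: hcomplete_fps_Cons fps_of_poly_mult mult_ac)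
  then show ?case
    using Cons by (simp add: fps_of_poly_linear_times_geometric_fps)
qed (simp add: hcomplete_fps_Nil)

lemma hcomplete_replicate_0: "k \<ge> 1 \<Longrightarrow> hcomplete k (replicate n 0) = 0"
proof -
  have "hcomplete_fps (replicate n 0) = 1"
    by (induction n) (simp_all add: hcomplete_fps_Nil hcomplete_fps_Cons geometric_fps_0)
  then show "k \<ge> 1 \<Longrightarrow> hcomplete k (replicate n 0) = 0"
    by (simp add: hcomplete_fps_def fps_eq_iff)
qed

lemma fps_conv_radius_geometric_fps:
  fixes x :: complex
  assumes "norm x < 1"
  shows "fps_conv_radius (geometric_fps x) > 1"
proof -
  define R where "R = 2 / (1 + norm x)"
  have "1 + norm x > 0"
    by (simp add: add_pos_nonneg)
  then have "R > 1"
    using assms by (simp add: R_def field_simps)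
  have "norm x * R < 1"
    using assms \<open>1 + norm x > 0\<close> by (simp add: R_def field_simps)
  have "fps_conv_radius (geometric_fps x) \<ge> R"
    unfolding fps_conv_radius_def
  proof (rule conv_radius_geI_ex')
    fix r :: real assume "0 < r" "ereal r < R"
    then have "norm (x * of_real r) < 1"
      using \<open>norm x * R < 1\<close> mult_left_mono[of r R "norm x"]
      by (simp add: norm_mult)
    then show "summable (\<lambda>n. fps_nth (geometric_fps x) n * of_real r ^ n)"
      by (simp add: geometric_fps_def summable_geometric flip: power_mult_distrib)
  qed
  moreover have "(1 :: ereal) < ereal R"
    using \<open>R > 1\<close> by (simp add: one_ereal_def)
  ultimately show ?thesis
    by (meson less_le_trans)
qed

lemma eval_geometric_fps: "norm x < 1 \<Longrightarrow> eval_fps (geometric_fps x) 1 = 1 / (1 - x)"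
  for x :: complex
  unfolding eval_fps_def geometric_fps_def using suminf_geometric by simp

lemma fps_conv_radius_hcomplete_fps:
  assumes "\<forall>x\<in>set xs. norm x < 1"
  shows "fps_conv_radius (hcomplete_fps xs) > 1"
  using assms
proof (induction xs)
  case (Cons a xs)
  then have "fps_conv_radius (geometric_fps a) > 1" "fps_conv_radius (hcomplete_fps xs) > 1"
    by (simp_all add: fps_conv_radius_geometric_fps)
  then have "1 < min (fps_conv_radius (geometric_fps a)) (fps_conv_radius (hcomplete_fps xs))"
    by simp
  also have "\<dots> \<le> fps_conv_radius (geometric_fps a * hcomplete_fps xs)"
    by (rule fps_conv_radius_mult)
  finally show ?case
    by (simp add: hcomplete_fps_Cons)
qed (simp add: hcomplete_fps_Nil)

lemma eval_hcomplete_fps: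
  assumes "\<forall>x\<in>set xs. norm x < 1"
  shows "eval_fps (hcomplete_fps xs) 1 = (\<Prod>x\<leftarrow>xs. 1 / (1 - x))"
  using assms
proof (induction xs)
  case (Cons a xs)
  then have "ereal (norm (1 :: complex)) < fps_conv_radius (geometric_fps a)"
    "ereal (norm (1 :: complex)) < fps_conv_radius (hcomplete_fps xs)"
    by (simp_all add: fps_conv_radius_geometric_fps fps_conv_radius_hcomplete_fps one_ereal_def[symmetric])
  with Cons show ?case
    by (simp add: hcomplete_fps_Cons eval_fps_mult eval_geometric_fps mult.commute)
qed (simp add: hcomplete_fps_Nil)

lemma hcomplete_sums:
  assumes "\<forall>x\<in>set xs. norm x < 1"
  shows "(\<lambda>k. hcomplete k xs) sums (\<Prod>x\<leftarrow>xs. 1 / (1 - x))"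
proof -
  have "ereal (norm (1 :: complex)) < fps_conv_radius (hcomplete_fps xs)"
    using fps_conv_radius_hcomplete_fps[OF assms] by (simp add: one_ereal_def)
  from sums_eval_fps[OF this] eval_hcomplete_fps[OF assms] show ?thesis
    by (simp add: hcomplete_fps_def)
qed

lemma linear_prod_times_fps_eq_0:
  fixes W :: "complex fps" and us :: "complex list"
  defines "Q \<equiv> \<Prod>u\<leftarrow>us. [:-u, 1:]"
  assumes us: "\<forall>u\<in>set us. u \<noteq> 0 \<and> ereal (norm u) < fps_conv_radius W"
    and low: "fps_nth (fps_of_poly Q * W) 0 = 0"
    and high: "\<And>n. length us < n \<Longrightarrow> fps_nth (fps_of_poly Q * W) n = 0"
  shows "fps_of_poly Q * W = 0"
proof -
  define R where "R = truncate_fps (Suc (length us)) (fps_of_poly Q * W)"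
  have R: "fps_of_poly R = fps_of_poly Q * W"
    unfolding R_def fps_of_poly_truncate by (rule fps_ext) (simp add: high)
  then have "Q dvd R"
    using us unfolding Q_def by (intro linear_prod_dvd_if_fps_factor) auto
  moreover have "degree R \<le> degree Q"
    using degree_truncate_fps[of "Suc (length us)" "fps_of_poly Q * W"]
    by (simp add: R_def Q_def degree_linear_prod)
  moreover have "poly R 0 = 0"
    using low by (simp add: R_def poly_0_coeff_0 coeff_truncate_fps)
  moreover have "poly Q 0 \<noteq> 0"
    using us unfolding Q_def by (induction us) auto
  ultimately have "R = 0"
    by (rule poly_eq_0_if_dvd_degree_le)
  with R show ?thesis
    by simp
qed

lemma hcomplete_fps_unique:
  fixes F :: "complex fps" and us :: "complex list"
  defines "Q \<equiv> \<Prod>u\<leftarrow>us. [:-u, 1:]"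
  assumes us: "\<forall>u\<in>set us. u \<noteq> 0 \<and> norm u < 1"
    and radius: "fps_conv_radius F \<ge> 1"
    and F0: "fps_nth F 0 = 1"
    and kernel: "\<And>n. length us < n \<Longrightarrow> fps_nth (fps_of_poly (Q * reflect_poly Q) * F) n = 0"
  shows "F = hcomplete_fps us"
proof -
  define D where "D = F - hcomplete_fps us"
  define W where "W = fps_of_poly (reflect_poly Q) * D"
  have QW: "fps_of_poly Q * W = fps_of_poly (Q * reflect_poly Q) * D"
    by (simp add: W_def fps_of_poly_mult mult.assoc)
  have "reflect_poly Q = (\<Prod>u\<leftarrow>us. [:1, -u:])"
    unfolding Q_def by (simp add: reflect_poly_prod_list o_def reflect_poly_linear)
  then have "fps_of_poly (Q * reflect_poly Q) * hcomplete_fps us = fps_of_poly Q"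
    using fps_of_poly_linear_prod_times_hcomplete_fps[of us] by (simp add: fps_of_poly_mult mult_ac)
  moreover have "degree Q = length us"
    by (simp add: Q_def degree_linear_prod)
  ultimately have "fps_nth (fps_of_poly Q * W) n = 0" if "length us < n" for n
    using kernel[OF that] that by (simp add: QW D_def ring_distribs coeff_eq_0)
  moreover have "fps_nth (fps_of_poly Q * W) 0 = 0"
    using F0 by (simp add: QW D_def hcomplete_fps_def hcomplete_0 fps_mult_nth)
  moreover have "ereal (norm u) < fps_conv_radius W" if "u \<in> set us" for u
  proof -
    have "ereal (norm u) < 1"
      using us that by (simp add: one_ereal_def)
    also have "1 \<le> min (fps_conv_radius F) (fps_conv_radius (hcomplete_fps us))"
      using radius fps_conv_radius_hcomplete_fps[of us] us by (simp add: less_imp_le)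
    also have "\<dots> \<le> fps_conv_radius D"
      unfolding D_def by (rule fps_conv_radius_diff)
    also have "\<dots> \<le> fps_conv_radius W"
      using fps_conv_radius_mult[of "fps_of_poly (reflect_poly Q)" D] by (simp add: W_def)
    finally show ?thesis .
  qed
  ultimately have "fps_of_poly Q * W = 0"
    using us unfolding Q_def by (intro linear_prod_times_fps_eq_0) auto
  then have "fps_of_poly (Q * reflect_poly Q) * D = 0"
    by (simp only: QW)
  moreover have "fps_of_poly (Q * reflect_poly Q) \<noteq> 0"
    using fps_of_poly_eq_iff[of _ 0] by (simp add: Q_def prod_list_zero_iff image_iff)
  ultimately show ?thesis
    by (simp add: D_def)
qed

section \<open>Positive walks\<close>

lemma positive_walk_snoc:
  "positive_walk (ws @ [s]) \<longleftrightarrow> positive_walk ws \<and> sum_list ws + s \<ge> 1"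
proof -
  have "{1..length (ws @ [s])} = insert (Suc (length ws)) {1..length ws}"
    by auto
  then show ?thesis
    unfolding positive_walk_def by auto
qed

lemma positive_walk_sum_list: "positive_walk ws \<Longrightarrow> ws \<noteq> [] \<Longrightarrow> sum_list ws \<ge> 1"
  unfolding positive_walk_def by (drule bspec[of _ _ "length ws"]) (auto simp: Suc_le_eq)

lemma walk_weight_Cons [simp]: "walk_weight p (s # ws) = p s * walk_weight p ws"
  by (simp add: walk_weight_def)

lemma walk_weight_snoc [simp]: "walk_weight p (ws @ [s]) = walk_weight p ws * p s"
  by (simp add: walk_weight_def)

lemma walk_weight_nonneg: "\<forall>s\<in>S. p s > 0 \<Longrightarrow> set ws \<subseteq> S \<Longrightarrow> walk_weight p ws \<ge> 0"
  unfolding walk_weight_def by (rule prod_list_nonneg) (auto intro: less_imp_le)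

lemma sum_walk_weight_lists:
  assumes "finite S"
  shows "(\<Sum>ws\<in>{ws. set ws \<subseteq> S \<and> length ws = n}. walk_weight p ws) = (\<Sum>s\<in>S. p s) ^ n"
proof (induction n)
  case 0
  have "{ws. set ws \<subseteq> S \<and> length ws = 0} = {[]}"
    by auto
  then show ?case
    by (simp add: walk_weight_def)
next
  case (Suc n)
  let ?L = "\<lambda>n. {ws. set ws \<subseteq> S \<and> length ws = n}"
  have L: "?L (Suc n) = (\<lambda>(s, ws). s # ws) ` (S \<times> ?L n)"
    by (auto simp: length_Suc_conv)
  have "(\<Sum>ws\<in>?L (Suc n). walk_weight p ws) = (\<Sum>(s, ws)\<in>S \<times> ?L n. p s * walk_weight p ws)"
    unfolding L by (subst sum.reindex) (auto simp: inj_on_def case_prod_unfold)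
  also have "\<dots> = (\<Sum>s\<in>S. p s) * (\<Sum>ws\<in>?L n. walk_weight p ws)"
    by (simp add: sum.cartesian_product[symmetric] sum_product)
  finally show ?case
    using Suc by simp
qed

lemma finite_walks: "finite S \<Longrightarrow> finite {ws. set ws \<subseteq> S \<and> length ws = n \<and> P ws}"
  by (rule finite_subset[OF _ finite_lists_length_eq[of S n]]) auto

lemma G_coeff_Suc:
  assumes "finite S" "k \<ge> 1"
  shows "G_coeff S p k (Suc n) = (\<Sum>s\<in>S. p s * G_coeff S p (k - s) n)"
proof -
  let ?A = "\<lambda>k n. {ws. set ws \<subseteq> S \<and> length ws = n \<and> positive_walk ws \<and> sum_list ws = k}"
  have A: "?A k (Suc n) = (\<lambda>(s, ws). ws @ [s]) ` (SIGMA s:S. ?A (k - s) n)"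
  proof (intro equalityI subsetI)
    fix ws assume ws: "ws \<in> ?A k (Suc n)"
    then obtain s ws' where "ws = ws' @ [s]"
      by (cases ws rule: rev_cases) auto
    with ws assms show "ws \<in> (\<lambda>(s, ws). ws @ [s]) ` (SIGMA s:S. ?A (k - s) n)"
      by (auto simp: positive_walk_snoc intro!: image_eqI[of _ _ "(s, ws')"])
  qed (use assms in \<open>auto simp: positive_walk_snoc\<close>)
  have "G_coeff S p k (Suc n) = (\<Sum>(s, ws)\<in>(SIGMA s:S. ?A (k - s) n). walk_weight p ws * p s)"
    unfolding G_coeff_def A by (subst sum.reindex) (auto simp: inj_on_def case_prod_unfold)
  also have "\<dots> = (\<Sum>s\<in>S. \<Sum>ws\<in>?A (k - s) n. walk_weight p ws * p s)"
    by (rule sum.Sigma[symmetric]) (use assms finite_walks in auto)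
  also have "\<dots> = (\<Sum>s\<in>S. p s * G_coeff S p (k - s) n)"
    unfolding G_coeff_def by (simp add: sum_distrib_left sum_distrib_right mult.commute)
  finally show ?thesis .
qed

lemma G_coeff_0: "G_coeff S p k 0 = (if k = 0 then 1 else 0)"
proof -
  have "{ws. set ws \<subseteq> S \<and> length ws = 0 \<and> positive_walk ws \<and> sum_list ws = k} =
      (if k = 0 then {[]} else {})"
    by (auto simp: positive_walk_def)
  then show ?thesis
    by (simp add: G_coeff_def walk_weight_def)
qed

lemma M_coeff_0: "M_coeff S p 0 = 1"
proof -
  have "{ws. set ws \<subseteq> S \<and> length ws = 0 \<and> positive_walk ws} = {[]}"
    by (auto simp: positive_walk_def)
  then show ?thesis
    by (simp add: M_coeff_def walk_weight_def)
qed

lemma G_coeff_nonpos: "k \<le> 0 \<Longrightarrow> n > 0 \<Longrightarrow> G_coeff S p k n = 0"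
  unfolding G_coeff_def using positive_walk_sum_list by (fastforce intro: sum.neutral)

lemma G_coeff_neg: "k < 0 \<Longrightarrow> G_coeff S p k n = 0"
  by (cases "n = 0") (auto simp: G_coeff_0 G_coeff_nonpos)

lemma G_coeff_nonneg: "\<forall>s\<in>S. p s > 0 \<Longrightarrow> G_coeff S p k n \<ge> 0"
  unfolding G_coeff_def by (rule sum_nonneg) (auto intro: walk_weight_nonneg)

lemma M_coeff_nonneg: "\<forall>s\<in>S. p s > 0 \<Longrightarrow> M_coeff S p n \<ge> 0"
  unfolding M_coeff_def by (rule sum_nonneg) (auto intro: walk_weight_nonneg)

lemma M_coeff_le_power:
  assumes "finite S" "\<forall>s\<in>S. p s > 0"
  shows "M_coeff S p n \<le> (\<Sum>s\<in>S. p s) ^ n"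
  unfolding M_coeff_def sum_walk_weight_lists[OF assms(1), symmetric]
  by (rule sum_mono2[OF finite_lists_length_eq[OF assms(1)]]) (auto intro: walk_weight_nonneg[OF assms(2)])

lemma G_coeff_le_M_coeff:
  assumes "finite S" "\<forall>s\<in>S. p s > 0"
  shows "G_coeff S p k n \<le> M_coeff S p n"
  unfolding M_coeff_def G_coeff_def
  by (rule sum_mono2[OF finite_walks[OF assms(1)]]) (auto intro: walk_weight_nonneg[OF assms(2)])

lemma sum_list_le_length_Max:
  assumes "finite S" "set ws \<subseteq> S"
  shows "sum_list ws \<le> int (length ws * nat (Max S))"
proof -
  have "sum_list ws \<le> int (length ws) * Max S"
    using assms(2) by (induction ws) (use Max_ge[OF assms(1)] in \<open>auto simp: algebra_simps intro!: add_mono\<close>)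
  also have "\<dots> \<le> int (length ws) * int (nat (Max S))"
    by (intro mult_left_mono) simp_all
  finally show ?thesis
    by simp
qed

lemma G_coeff_eq_0_if_gt:
  assumes "finite S" "k > n * nat (Max S)"
  shows "G_coeff S p (int k) n = 0"
proof -
  have "int (n * nat (Max S)) < int k"
    using assms(2) by (simp only: of_nat_less_iff)
  then have "sum_list ws \<noteq> int k" if "set ws \<subseteq> S" "length ws = n" for ws
    using sum_list_le_length_Max[OF assms(1) that(1), unfolded that(2)] by linarith
  then show ?thesis
    unfolding G_coeff_def by (auto intro: sum.neutral)
qed

lemma M_coeff_eq_sum_G_coeff:
  assumes "finite S"
  shows "M_coeff S p n = (\<Sum>k\<le>n * nat (Max S). G_coeff S p (int k) n)"
proof -
  let ?A = "{ws. set ws \<subseteq> S \<and> length ws = n \<and> positive_walk ws}"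
  have sum_list_bounds: "sum_list ws \<ge> 0 \<and> nat (sum_list ws) \<le> n * nat (Max S)" if "ws \<in> ?A" for ws
    using that positive_walk_sum_list[of ws] sum_list_le_length_Max[OF assms, of ws]
    by (cases "ws = []") (auto simp: nat_le_iff)
  have "M_coeff S p n = (\<Sum>k\<le>n * nat (Max S). \<Sum>ws\<in>{ws \<in> ?A. nat (sum_list ws) = k}. walk_weight p ws)"
    unfolding M_coeff_def
    by (rule sum.group[symmetric]) (use finite_walks[OF assms] sum_list_bounds in auto)
  also have "\<dots> = (\<Sum>k\<le>n * nat (Max S). G_coeff S p (int k) n)"
    unfolding G_coeff_def using sum_list_bounds by (intro sum.cong refl arg_cong2[of _ _ _ _ sum]) auto
  finally show ?thesis .
qed

section \<open>Symmetric step sets and the kernel method\<close>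

lemma coeff_sum_monom_int:
  fixes g :: "int \<Rightarrow> int"
  assumes "finite S" "inj g" "\<forall>s\<in>S. g s \<ge> 0" "g t \<ge> 0"
  shows "coeff (\<Sum>s\<in>S. monom (c s) (nat (g s))) (nat (g t)) = (if t \<in> S then c t else 0)"
proof -
  have "coeff (\<Sum>s\<in>S. monom (c s) (nat (g s))) (nat (g t)) = (\<Sum>s\<in>S. if s = t then c s else 0)"
    unfolding coeff_sum coeff_monom
    using assms(2-4) by (intro sum.cong refl) (auto simp: nat_eq_iff2 inj_eq)
  also have "\<dots> = (if t \<in> S then c t else 0)"
    using assms(1) by (simp add: sum.delta')
  finally show ?thesis .
qed

lemma power_nat_shift:
  fixes u :: "'a::field"
  assumes "u \<noteq> 0" "s + int N \<ge> 0"
  shows "u ^ nat (s + int N) = u ^ N * u powi s"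
proof -
  have "u ^ nat (s + int N) = u powi (s + int N)"
    using assms(2) by (simp add: power_int_nonneg_exp)
  also have "\<dots> = u ^ N * u powi s"
    using assms(1) by (simp add: power_int_add)
  finally show ?thesis .
qed

lemma symmetric_step_set:
  assumes "finite S" and pos: "\<forall>s\<in>S. p s > 0"
    and sym: "\<forall>u::complex. u \<noteq> 0 \<longrightarrow> stepP S p u = stepP S p (1 / u)"
    and "s \<in> S"
  shows "-s \<in> S \<and> p (-s) = p s"
proof -
  define N where "N = nat (\<Sum>s\<in>S. \<bar>s\<bar>)"
  have N: "\<bar>s\<bar> \<le> int N" if "s \<in> S" for s
    unfolding N_def using member_le_sum[of s S abs] that \<open>finite S\<close> by auto
  define A where "A = (\<Sum>s\<in>S. monom (complex_of_real (p s)) (nat (s + int N)))"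
  define B where "B = (\<Sum>s\<in>S. monom (complex_of_real (p s)) (nat (int N - s)))"
  have poly_AB: "poly A u = u ^ N * stepP S p u" "poly B u = u ^ N * stepP S p (1 / u)" if "u \<noteq> 0" for u
  proof -
    have "u ^ nat (s + int N) = u ^ N * u powi s" "u ^ nat (int N - s) = u ^ N * (1 / u) powi s"
      if "s \<in> S" for s
    proof -
      show "u ^ nat (s + int N) = u ^ N * u powi s"
        by (rule power_nat_shift[OF \<open>u \<noteq> 0\<close>]) (use N[OF that] in linarith)
      have "u ^ nat (- s + int N) = u ^ N * u powi (- s)"
        by (rule power_nat_shift[OF \<open>u \<noteq> 0\<close>]) (use N[OF that] in linarith)
      then show "u ^ nat (int N - s) = u ^ N * (1 / u) powi s"
        by (simp only: power_int_minus_divide power_int_one_over diff_conv_add_uminus add.commute)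
    qed
    then show "poly A u = u ^ N * stepP S p u" "poly B u = u ^ N * stepP S p (1 / u)"
      unfolding A_def B_def stepP_def poly_sum poly_monom sum_distrib_left
      by (auto intro!: sum.cong simp: mult_ac)
  qed
  have "A = B"
  proof (rule poly_eqI_nonzero)
    fix u :: complex assume "u \<noteq> 0"
    then show "poly A u = poly B u"
      using poly_AB[OF \<open>u \<noteq> 0\<close>] sym[rule_format, OF \<open>u \<noteq> 0\<close>] by simp
  qed
  moreover have "coeff A (nat (s + int N)) = complex_of_real (p s)"
    unfolding A_def using N \<open>s \<in> S\<close> \<open>finite S\<close>
    by (subst coeff_sum_monom_int) (auto simp: inj_def abs_le_iff dest!: N)
  moreover have "coeff B (nat (int N - (-s))) = (if -s \<in> S then complex_of_real (p (-s)) else 0)"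
    unfolding B_def using N \<open>s \<in> S\<close> \<open>finite S\<close>
    by (subst coeff_sum_monom_int) (auto simp: inj_def abs_le_iff dest!: N)
  ultimately show ?thesis
    using pos \<open>s \<in> S\<close> by (auto simp: add.commute split: if_splits)
qed

lemma norm_power_int_le:
  fixes x :: complex
  assumes "0 < r" "r \<le> 1" "r \<le> norm x" "norm x \<le> 1 / r" "\<bar>s\<bar> \<le> int n"
  shows "norm (x powi s) \<le> (1 / r) ^ n"
proof -
  have "1 \<le> 1 / r"
    using assms(1,2) by simp
  have "inverse (norm x) \<le> 1 / r"
    using le_imp_inverse_le[OF assms(3,1)] by (simp add: inverse_eq_divide)
  have "norm (x powi s) \<le> (1 / r) ^ nat \<bar>s\<bar>"
  proof (cases "s \<ge> 0")
    case True
    then have "norm (x powi s) = norm x ^ nat \<bar>s\<bar>"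
      by (simp add: norm_power_int power_int_nonneg_exp norm_power)
    also have "\<dots> \<le> (1 / r) ^ nat \<bar>s\<bar>"
      using assms(4) by (intro power_mono) auto
    finally show ?thesis .
  next
    case False
    then have "norm (x powi s) = inverse (norm x) ^ nat \<bar>s\<bar>"
      using power_int_minus[of x "-s"]
      by (simp add: norm_power_int power_int_nonneg_exp power_inverse norm_inverse norm_power)
    also have "\<dots> \<le> (1 / r) ^ nat \<bar>s\<bar>"
      using \<open>inverse (norm x) \<le> 1 / r\<close> by (intro power_mono) auto
    finally show ?thesis .
  qed
  also have "\<dots> \<le> (1 / r) ^ n"
    using \<open>1 \<le> 1 / r\<close> assms(5) by (intro power_increasing) auto
  finally show ?thesis .
qed

lemma le_1_if_le_le_divide:
  fixes a b :: real
  assumes "0 < a" "a \<le> b" "b \<le> 1 / a"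
  shows "a \<le> 1"
  using assms by (smt (verit) mult_le_one divide_le_eq_1 le_divide_eq_1)

locale symmetric_steps =
  fixes S :: "int set" and p :: "int \<Rightarrow> real"
  assumes finite_steps: "finite S" and steps_nonempty: "S \<noteq> {}"
    and weights_pos: "\<forall>s\<in>S. p s > 0"
    and stepP_symmetric: "\<forall>u::complex. u \<noteq> 0 \<longrightarrow> stepP S p u = stepP S p (1 / u)"
    and Max_ge_1: "Max S \<ge> 1"
begin

abbreviation H :: nat where "H \<equiv> nat (Max S)"

abbreviation total_weight :: real where "total_weight \<equiv> \<Sum>s\<in>S. p s"

lemma Max_mem: "Max S \<in> S"
  using finite_steps steps_nonempty by simp

lemma uminus_Max_mem: "- Max S \<in> S"
  using symmetric_step_set[OF finite_steps weights_pos stepP_symmetric Max_mem] by simp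

lemma step_bounds: "s \<in> S \<Longrightarrow> - Max S \<le> s \<and> s \<le> Max S"
  using symmetric_step_set[OF finite_steps weights_pos stepP_symmetric, of s] finite_steps
  by (auto simp: minus_le_iff)

lemma total_weight_pos: "total_weight > 0"
  using weights_pos Max_mem finite_steps by (intro sum_pos2[OF finite_steps Max_mem]) (auto intro: less_imp_le)

lemma poly_kernel_poly:
  assumes "u \<noteq> 0"
  shows "poly (kernel_poly S p z) u = u ^ H * (1 - z * stepP S p u)"
proof -
  have "u ^ nat (s + Max S) = u ^ H * u powi s" if "s \<in> S" for s
    using power_nat_shift[OF assms, of s H] step_bounds[OF that] Max_ge_1 by simp
  then have "(\<Sum>s\<in>S. complex_of_real (p s) * u ^ nat (s + Max S)) = u ^ H * stepP S p u"
    unfolding stepP_def sum_distrib_left by (auto intro!: sum.cong simp: mult_ac)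
  then show ?thesis
    by (simp add: kernel_poly_def poly_sum poly_monom algebra_simps)
qed

lemma coeff_kernel_poly_step:
  assumes "t \<in> S" "nat (t + Max S) \<noteq> H"
  shows "coeff (kernel_poly S p z) (nat (t + Max S)) = - z * p t"
proof -
  have "coeff (\<Sum>s\<in>S. monom (complex_of_real (p s)) (nat (s + Max S))) (nat (t + Max S)) = p t"
    by (subst coeff_sum_monom_int) (use assms finite_steps in \<open>auto simp: inj_def dest!: step_bounds\<close>)
  then show ?thesis
    using assms(2) by (simp add: kernel_poly_def)
qed

lemma nat_step_shift_le: "s \<in> S \<Longrightarrow> nat (s + Max S) \<le> 2 * H"
  using step_bounds[of s] by (simp add: nat_le_iff)

lemma coeff_kernel_poly_0: "coeff (kernel_poly S p z) 0 = - z * p (- Max S)"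
  using coeff_kernel_poly_step[OF uminus_Max_mem] Max_ge_1 by simp

lemma kernel_poly_nonzero: "z \<noteq> 0 \<Longrightarrow> poly (kernel_poly S p z) 0 \<noteq> 0"
  using coeff_kernel_poly_0[of z] weights_pos uminus_Max_mem by (auto simp: poly_0_coeff_0)

lemma degree_kernel_poly:
  assumes "z \<noteq> 0"
  shows "degree (kernel_poly S p z) = 2 * H"
proof (rule antisym)
  show "degree (kernel_poly S p z) \<le> 2 * H"
    by (rule degree_le)
       (auto simp: kernel_poly_def coeff_sum intro!: sum.neutral dest!: nat_step_shift_le)
  have "nat (Max S + Max S) = 2 * H"
    using Max_ge_1 by simp
  then have "coeff (kernel_poly S p z) (2 * H) = - z * p (Max S)"
    using coeff_kernel_poly_step[OF Max_mem] Max_ge_1 by simp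
  then show "2 * H \<le> degree (kernel_poly S p z)"
    using assms weights_pos Max_mem by (intro le_degree) auto
qed

lemma reflect_kernel_poly:
  assumes "z \<noteq> 0"
  shows "reflect_poly (kernel_poly S p z) = kernel_poly S p z"
proof (rule poly_eqI_nonzero)
  fix u :: complex assume "u \<noteq> 0"
  have inv: "poly (kernel_poly S p z) (inverse u) * u ^ H = 1 - z * stepP S p u"
    using poly_kernel_poly[of "inverse u" z] stepP_symmetric[rule_format, of "inverse u"] \<open>u \<noteq> 0\<close>
    by (simp add: divide_inverse power_inverse)
  have "u ^ (2 * H) * poly (kernel_poly S p z) (inverse u) =
      u ^ H * (poly (kernel_poly S p z) (inverse u) * u ^ H)"
    by (simp add: power_mult power2_eq_square mult_ac flip: power_mult_distrib)
  also have "\<dots> = poly (kernel_poly S p z) u"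
    using poly_kernel_poly[OF \<open>u \<noteq> 0\<close>, of z] inv
    by simp
  finally have "u ^ (2 * H) * poly (kernel_poly S p z) (inverse u) = poly (kernel_poly S p z) u" .
  then show "poly (reflect_poly (kernel_poly S p z)) u = poly (kernel_poly S p z) u"
    using \<open>u \<noteq> 0\<close> by (simp add: poly_reflect_poly_nz degree_kernel_poly[OF assms])
qed

lemma kernel_root_gap:
  assumes "0 < r" "r \<le> 1" "norm z * total_weight < r ^ H"
    and root: "poly (kernel_poly S p z) x = 0"
  shows "norm x < r \<or> 1 / r < norm x"
proof (rule ccontr)
  assume "\<not> ?thesis"
  then have x: "r \<le> norm x" "norm x \<le> 1 / r"
    by auto
  then have "x \<noteq> 0"
    using assms(1) by auto
  then have "z * stepP S p x = 1"
    using root poly_kernel_poly[of x z] by simp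
  have "norm (stepP S p x) \<le> (\<Sum>s\<in>S. p s * (1 / r) ^ H)"
    unfolding stepP_def
  proof (rule order_trans[OF norm_sum sum_mono])
    fix s assume "s \<in> S"
    then have "\<bar>s\<bar> \<le> int H"
      using step_bounds[of s] Max_ge_1 by auto
    then show "norm (complex_of_real (p s) * x powi s) \<le> p s * (1 / r) ^ H"
      using norm_power_int_le[OF assms(1,2) x] weights_pos \<open>s \<in> S\<close>
      by (auto simp: norm_mult intro!: mult_left_mono)
  qed
  have "1 = norm z * norm (stepP S p x)"
    using arg_cong[OF \<open>z * stepP S p x = 1\<close>, of norm] by (simp add: norm_mult)
  also have "\<dots> \<le> norm z * (total_weight * (1 / r) ^ H)"
    using \<open>norm (stepP S p x) \<le> _\<close> by (intro mult_left_mono) (simp_all add: sum_distrib_right)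
  also have "\<dots> < r ^ H * (1 / r) ^ H"
    using assms(1,3) by (simp add: mult.assoc[symmetric])
  also have "\<dots> = 1"
    using assms(1) by (simp add: power_one_over)
  finally show False
    by simp
qed

lemma kernel_roots_split:
  assumes "z \<noteq> 0" "0 < r" "r \<le> 1" "norm z * total_weight < r ^ H"
  defines "A \<equiv> filter_mset (\<lambda>x. norm x < r) (proots (kernel_poly S p z))"
  shows "proots (kernel_poly S p z) = A + image_mset inverse A" "size A = H" "0 \<notin># A"
proof -
  let ?K = "kernel_poly S p z"
  have "?K \<noteq> 0"
    using kernel_poly_nonzero[OF assms(1)] by auto
  then have "0 \<notin># proots ?K"
    using kernel_poly_nonzero[OF assms(1)] by simp
  then show "0 \<notin># A"
    by (simp add: A_def)
  have "image_mset inverse (proots ?K) = proots ?K"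
    using proots_reflect_poly[OF kernel_poly_nonzero[OF assms(1)]]
    by (simp add: reflect_kernel_poly[OF assms(1)])
  with \<open>0 \<notin># proots ?K\<close> show split: "proots ?K = A + image_mset inverse A"
    unfolding A_def using kernel_root_gap[OF assms(2-4)] \<open>?K \<noteq> 0\<close> assms(2,3)
    by (intro inverse_closed_mset_split) auto
  have "size (proots ?K) = 2 * H"
    by (simp add: size_proots_complex degree_kernel_poly[OF assms(1)])
  then show "size A = H"
    by (subst (asm) split) simp
qed

lemma kernel_poly_factorization:
  assumes "z \<noteq> 0" "0 < r" "r \<le> 1" "norm z * total_weight < r ^ H"
    and us: "mset us = filter_mset (\<lambda>x. norm x < r) (proots (kernel_poly S p z))"
  defines "Q \<equiv> \<Prod>u\<leftarrow>us. [:-u, 1:]"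
  obtains c where "c \<noteq> 0" "kernel_poly S p z = smult c (Q * reflect_poly Q)"
proof -
  let ?K = "kernel_poly S p z"
  note split = kernel_roots_split[OF assms(1-4), folded us]
  have "poly Q 0 \<noteq> 0"
    using split(3) unfolding Q_def by (induction us) auto
  then have "Q \<noteq> 0" "reflect_poly Q \<noteq> 0"
    by auto
  have "proots Q = mset us"
    by (simp add: Q_def proots_linear_prod)
  then have "proots (Q * reflect_poly Q) = proots ?K"
    using split(1) \<open>Q \<noteq> 0\<close> \<open>reflect_poly Q \<noteq> 0\<close>
    by (simp add: proots_mult proots_reflect_poly[OF \<open>poly Q 0 \<noteq> 0\<close>])
  then have "?K = smult (lead_coeff ?K / lead_coeff (Q * reflect_poly Q)) (Q * reflect_poly Q)"
    using \<open>Q \<noteq> 0\<close> \<open>reflect_poly Q \<noteq> 0\<close> by (intro complex_poly_eq_smult_if_proots_eq) simp_all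
  moreover have "lead_coeff ?K / lead_coeff (Q * reflect_poly Q) \<noteq> 0"
    using kernel_poly_nonzero[OF assms(1)] \<open>Q \<noteq> 0\<close> \<open>reflect_poly Q \<noteq> 0\<close> by auto
  ultimately show ?thesis
    using that by blast
qed

lemma norm_G_term_le: "norm (complex_of_real (G_coeff S p k n) * z ^ n) \<le> (norm z * total_weight) ^ n"
proof -
  have "G_coeff S p k n \<le> total_weight ^ n"
    using G_coeff_le_M_coeff[OF finite_steps weights_pos] M_coeff_le_power[OF finite_steps weights_pos]
    by (rule order_trans)
  then have "\<bar>G_coeff S p k n\<bar> \<le> total_weight ^ n"
    using G_coeff_nonneg[OF weights_pos] by simp
  then show ?thesis
    by (simp add: norm_mult norm_power power_mult_distrib mult.commute mult_left_mono)
qed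

lemma Gf_sums:
  assumes "norm z * total_weight < 1"
  shows "(\<lambda>n. complex_of_real (G_coeff S p k n) * z ^ n) sums Gf S p k z"
proof -
  have "summable (\<lambda>n. (norm z * total_weight) ^ n)"
    using assms total_weight_pos by (intro summable_geometric) auto
  then have "summable (\<lambda>n. complex_of_real (G_coeff S p k n) * z ^ n)"
    by (rule summable_comparison_test'[OF _ norm_G_term_le])
  then show ?thesis
    unfolding Gf_def by (rule summable_sums)
qed

lemma norm_Gf_le:
  assumes "norm z * total_weight < 1"
  shows "norm (Gf S p k z) \<le> 1 / (1 - norm z * total_weight)"
proof -
  have geometric: "(\<lambda>n. (norm z * total_weight) ^ n) sums (1 / (1 - norm z * total_weight))"
    using assms total_weight_pos by (intro geometric_sums) auto
  have "norm (Gf S p k z) \<le> (\<Sum>n. (norm z * total_weight) ^ n)"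
    unfolding Gf_def using geometric norm_G_term_le by (intro norm_suminf_le) (auto simp: sums_iff)
  with geometric show ?thesis
    by (simp add: sums_iff)
qed

lemma Gf_0: "Gf S p 0 z = 1"
proof -
  have "(\<lambda>n. complex_of_real (G_coeff S p 0 n) * z ^ n) = (\<lambda>n. if n = 0 then 1 else 0)"
    by (auto simp: G_coeff_0 G_coeff_nonpos)
  then show ?thesis
    unfolding Gf_def using sums_single[of 0 "\<lambda>_. 1 :: complex"] by (simp add: sums_iff)
qed

lemma Gf_neg: "k < 0 \<Longrightarrow> Gf S p k z = 0"
  by (simp add: Gf_def G_coeff_neg)

lemma Gf_last_step:
  assumes "norm z * total_weight < 1" "k \<ge> 1"
  shows "Gf S p k z = z * (\<Sum>s\<in>S. complex_of_real (p s) * Gf S p (k - s) z)"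
proof -
  let ?a = "\<lambda>k n. complex_of_real (G_coeff S p k n) * z ^ n"
  have "(\<lambda>n. ?a k (Suc n)) = (\<lambda>n. z * (\<Sum>s\<in>S. complex_of_real (p s) * ?a (k - s) n))"
    using G_coeff_Suc[OF finite_steps assms(2)] by (simp add: sum_distrib_left sum_distrib_right mult_ac)
  moreover have "(\<lambda>n. z * (\<Sum>s\<in>S. complex_of_real (p s) * ?a (k - s) n))
      sums (z * (\<Sum>s\<in>S. complex_of_real (p s) * Gf S p (k - s) z))"
    by (intro sums_mult sums_sum Gf_sums[OF assms(1)])
  ultimately have "(\<lambda>n. ?a k (Suc n)) sums (z * (\<Sum>s\<in>S. complex_of_real (p s) * Gf S p (k - s) z))"
    by (simp only:)
  then have "?a k sums (z * (\<Sum>s\<in>S. complex_of_real (p s) * Gf S p (k - s) z) + ?a k 0)"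
    by (rule sums_Suc_iff[THEN iffD1])
  moreover have "?a k 0 = 0"
    using assms(2) by (simp add: G_coeff_0)
  ultimately show ?thesis
    using Gf_sums[OF assms(1), of k] sums_unique2 by simp
qed

definition altitude_fps :: "complex \<Rightarrow> complex fps" where
  "altitude_fps z = Abs_fps (\<lambda>k. Gf S p (int k) z)"

lemma fps_conv_radius_altitude_fps:
  assumes "norm z * total_weight < 1"
  shows "fps_conv_radius (altitude_fps z) \<ge> 1"
  unfolding fps_conv_radius_def
proof (rule conv_radius_geI_ex')
  fix r :: real assume r: "0 < r" "ereal r < 1"
  define C where "C = 1 / (1 - norm z * total_weight)"
  have "norm (fps_nth (altitude_fps z) n * of_real r ^ n) \<le> C * r ^ n" for n
  proof -
    have "norm (fps_nth (altitude_fps z) n * of_real r ^ n) = norm (Gf S p (int n) z) * r ^ n"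
      using r by (simp add: altitude_fps_def norm_mult norm_power)
    also have "\<dots> \<le> C * r ^ n"
      unfolding C_def using norm_Gf_le[OF assms] r by (intro mult_right_mono) auto
    finally show ?thesis .
  qed
  moreover have "summable (\<lambda>n. C * r ^ n)"
    using r by (intro summable_mult summable_geometric) auto
  ultimately show "summable (\<lambda>n. fps_nth (altitude_fps z) n * of_real r ^ n)"
    by (rule summable_comparison_test'[rotated])
qed

lemma fps_nth_X_power_mult_altitude_fps:
  "fps_nth (fps_X ^ m * altitude_fps z) n = Gf S p (int n - int m) z"
  by (simp add: fps_X_power_mult_nth altitude_fps_def Gf_neg of_nat_diff)

lemma kernel_equation:
  assumes "norm z * total_weight < 1" "H < n"
  shows "fps_nth (fps_of_poly (kernel_poly S p z) * altitude_fps z) n = 0"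
proof -
  define k where "k = int n - Max S"
  have "k \<ge> 1"
    using assms(2) Max_ge_1 unfolding k_def by linarith
  have "fps_of_poly (kernel_poly S p z) * altitude_fps z = fps_X ^ H * altitude_fps z -
      fps_const z * (\<Sum>s\<in>S. fps_const (complex_of_real (p s)) * (fps_X ^ nat (s + Max S) * altitude_fps z))"
    by (simp add: kernel_poly_def fps_of_poly_diff fps_of_poly_monom fps_of_poly_smult fps_of_poly_sum
        ring_distribs sum_distrib_left sum_distrib_right mult_ac)
  then have "fps_nth (fps_of_poly (kernel_poly S p z) * altitude_fps z) n =
      Gf S p (int n - int H) z -
      z * (\<Sum>s\<in>S. complex_of_real (p s) * Gf S p (int n - int (nat (s + Max S))) z)"
    by (simp add: fps_sum_nth fps_nth_X_power_mult_altitude_fps)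
  also have "\<dots> = Gf S p k z - z * (\<Sum>s\<in>S. complex_of_real (p s) * Gf S p (k - s) z)"
    using Max_ge_1 by (auto simp: k_def algebra_simps dest!: step_bounds intro!: sum.cong)
  also have "\<dots> = 0"
    using Gf_last_step[OF assms(1) \<open>k \<ge> 1\<close>] by simp
  finally show ?thesis .
qed

lemma altitude_fps_eq_hcomplete_fps:
  assumes "z \<noteq> 0" "0 < r" "r \<le> 1" "norm z * total_weight < r ^ H"
    and us: "mset us = filter_mset (\<lambda>x. norm x < r) (proots (kernel_poly S p z))"
  shows "altitude_fps z = hcomplete_fps us"
proof -
  let ?Q = "\<Prod>u\<leftarrow>us. [:-u, 1:]"
  obtain c where "c \<noteq> 0" and K: "kernel_poly S p z = smult c (?Q * reflect_poly ?Q)"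
    using kernel_poly_factorization[OF assms] by blast
  have "norm z * total_weight < 1"
    using assms(2-4) power_le_one[of r H] by linarith
  note split = kernel_roots_split[OF assms(1-4), folded us]
  show ?thesis
  proof (rule hcomplete_fps_unique)
    show "\<forall>u\<in>set us. u \<noteq> 0 \<and> norm u < 1"
      using split(3) us assms(3) by (auto simp flip: set_mset_mset)
    show "1 \<le> fps_conv_radius (altitude_fps z)"
      by (rule fps_conv_radius_altitude_fps) fact
    show "fps_nth (altitude_fps z) 0 = 1"
      by (simp add: altitude_fps_def Gf_0)
    fix n assume "length us < n"
    then have "fps_nth (fps_of_poly (kernel_poly S p z) * altitude_fps z) n = 0"
      using split(2) us by (intro kernel_equation) (simp_all add: \<open>norm z * total_weight < 1\<close> flip: size_mset)
    then show "fps_nth (fps_of_poly (?Q * reflect_poly ?Q) * altitude_fps z) n = 0"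
      using \<open>c \<noteq> 0\<close> by (simp add: K fps_of_poly_smult mult.assoc)
  qed
qed

lemma Gf_sums_Mf:
  assumes "norm z * total_weight < 1"
  shows "(\<lambda>k. Gf S p (int k) z) sums Mf S p z"
proof -
  define f where "f n k = complex_of_real (G_coeff S p (int k) n) * z ^ n" for n k
  have outside: "f n k = 0" if "k \<notin> {..n * H}" for n k
    using that G_coeff_eq_0_if_gt[OF finite_steps] by (simp add: f_def)
  have "(\<Sum>k\<le>n * H. f n k) = complex_of_real (M_coeff S p n) * z ^ n" for n
    by (simp add: f_def M_coeff_eq_sum_G_coeff[OF finite_steps] sum_distrib_right)
  then have "(\<lambda>k. f n k) sums (complex_of_real (M_coeff S p n) * z ^ n)" for n
    using sums_finite[of "{..n * H}" "f n"] outside by simp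
  moreover have "(\<Sum>k\<le>n * H. norm (f n k)) = M_coeff S p n * norm z ^ n" for n
    using G_coeff_nonneg[OF weights_pos]
    by (simp add: f_def M_coeff_eq_sum_G_coeff[OF finite_steps] sum_distrib_right norm_mult norm_power)
  then have row_norms: "(\<lambda>k. norm (f n k)) sums (M_coeff S p n * norm z ^ n)" for n
    using sums_finite[of "{..n * H}" "\<lambda>k. norm (f n k)"] outside by simp
  moreover have "summable (\<lambda>n. \<Sum>k. norm (f n k))"
  proof (rule summable_comparison_test')
    show "summable (\<lambda>n. (norm z * total_weight) ^ n)"
      using assms total_weight_pos by (intro summable_geometric) auto
    show "norm (\<Sum>k. norm (f n k)) \<le> (norm z * total_weight) ^ n" for n
      using row_norms[of n, THEN sums_unique, symmetric] M_coeff_nonneg[OF weights_pos, of n]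
        mult_right_mono[OF M_coeff_le_power[OF finite_steps weights_pos], of "norm z ^ n" n]
      by (simp add: power_mult_distrib mult.commute)
  qed
  moreover have "(\<lambda>n. f n k) sums Gf S p (int k) z" for k
    unfolding f_def by (rule Gf_sums[OF assms])
  ultimately have "(\<lambda>k. Gf S p (int k) z) sums (\<Sum>n. complex_of_real (M_coeff S p n) * z ^ n)"
    by (intro sums_swap[of f]) (auto simp: sums_iff)
  then show ?thesis
    by (simp add: Mf_def)
qed

lemma roots_in_disk_0: "r > 0 \<Longrightarrow> roots_in_disk S p r 0 = mset (replicate H 0)"
proof -
  have "kernel_poly S p 0 = [:0, 1:] ^ H"
    by (simp add: kernel_poly_def monom_altdef)
  then have "proots (kernel_poly S p 0) = mset (replicate H 0)"
    by (simp add: proots_power)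
  moreover have "r > 0 \<Longrightarrow> filter_mset (\<lambda>u. norm u < r) (mset (replicate H 0)) = mset (replicate H (0 :: complex))"
    by (simp only: mset_filter[symmetric]) simp
  ultimately show "r > 0 \<Longrightarrow> roots_in_disk S p r 0 = mset (replicate H 0)"
    by (simp only: roots_in_disk_def)
qed

lemma Gf_at_0: "Gf S p k 0 = (if k = 0 then 1 else 0)"
  unfolding Gf_def using powser_zero[of "\<lambda>n. complex_of_real (G_coeff S p k n)"] by (simp add: G_coeff_0)

lemma Mf_at_0: "Mf S p 0 = 1"
  unfolding Mf_def using powser_zero[of "\<lambda>n. complex_of_real (M_coeff S p n)"] by (simp add: M_coeff_0)

lemma roots_in_disk_eq_filter:
  assumes "z \<noteq> 0" "0 < r0" "r0 \<le> r" "r \<le> 1 / r0" "norm z * total_weight < r0 ^ H"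
  shows "roots_in_disk S p r z = filter_mset (\<lambda>x. norm x < r0) (proots (kernel_poly S p z))"
  unfolding roots_in_disk_def
proof (rule filter_mset_cong[OF refl])
  fix x assume "x \<in># proots (kernel_poly S p z)"
  moreover have "kernel_poly S p z \<noteq> 0"
    using kernel_poly_nonzero[OF assms(1)] by auto
  ultimately have "poly (kernel_poly S p z) x = 0"
    by simp
  moreover have "r0 \<le> 1"
    using assms(2-4) by (rule le_1_if_le_le_divide)
  ultimately have "norm x < r0 \<or> 1 / r0 < norm x"
    using kernel_root_gap[OF assms(2) _ assms(5)] by blast
  then show "norm x < r \<longleftrightarrow> norm x < r0"
    using assms(3,4) by auto
qed

definition walk_gf_identities :: "real \<Rightarrow> complex \<Rightarrow> complex list \<Rightarrow> bool" where
  "walk_gf_identities r z us \<longleftrightarrow> mset us = roots_in_disk S p r z \<and> length us = H \<and>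
     (\<lambda>k. Gf S p (int (Suc k)) z) sums (Mf S p z - 1) \<and>
     Mf S p z = (\<Prod>u\<leftarrow>us. 1 / (1 - u)) \<and>
     (\<forall>k::nat. k \<ge> 1 \<longrightarrow> Gf S p (int k) z = hcomplete k us)"

lemma expansion_at_0:
  assumes "r > 0"
  shows "\<exists>us. walk_gf_identities r 0 us"
  using roots_in_disk_0[OF assms]
  by (intro exI[of _ "replicate H 0"])
     (simp add: walk_gf_identities_def Gf_at_0 Mf_at_0 hcomplete_replicate_0)

lemma expansion_at_nonzero:
  assumes "z \<noteq> 0" "0 < r0" "r0 \<le> r" "r \<le> 1 / r0" "norm z * total_weight < r0 ^ H"
  shows "\<exists>us. walk_gf_identities r z us"
proof -
  obtain us where us: "mset us = roots_in_disk S p r z"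
    using ex_mset by blast
  have "r0 \<le> 1"
    using assms(2-4) by (rule le_1_if_le_le_divide)
  have us_filter: "mset us = filter_mset (\<lambda>x. norm x < r0) (proots (kernel_poly S p z))"
    using us roots_in_disk_eq_filter[OF assms] by simp
  have "length us = H"
    using kernel_roots_split(2)[OF assms(1,2) \<open>r0 \<le> 1\<close> assms(5)] arg_cong[OF us_filter, of size]
    by simp
  have Gf_hcomplete: "Gf S p (int k) z = hcomplete k us" for k
    using altitude_fps_eq_hcomplete_fps[OF assms(1,2) \<open>r0 \<le> 1\<close> assms(5) us_filter]
    by (simp add: fps_eq_iff altitude_fps_def hcomplete_fps_def)
  have "norm z * total_weight < 1"
    using assms(2,5) \<open>r0 \<le> 1\<close> power_le_one[of r0 H] by linarith
  have "\<forall>u\<in>set us. norm u < 1"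
    using us_filter \<open>r0 \<le> 1\<close> by (auto simp flip: set_mset_mset)
  then have "Mf S p z = (\<Prod>u\<leftarrow>us. 1 / (1 - u))"
    using Gf_sums_Mf[OF \<open>norm z * total_weight < 1\<close>] hcomplete_sums
    by (simp add: Gf_hcomplete sums_unique2)
  moreover have "(\<lambda>k. Gf S p (int (Suc k)) z) sums (Mf S p z - 1)"
    using Gf_sums_Mf[OF \<open>norm z * total_weight < 1\<close>] sums_Suc_iff[of "\<lambda>k. Gf S p (int k) z"]
    by (simp add: Gf_0)
  ultimately show ?thesis
    using us \<open>length us = H\<close> Gf_hcomplete unfolding walk_gf_identities_def by blast
qed

lemma small_roots_expansion:
  "\<forall>r>0. \<exists>\<epsilon>>0. \<forall>z::complex. cmod z < \<epsilon> \<longrightarrow> (\<exists>us. walk_gf_identities r z us)"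
proof (intro allI impI)
  fix r :: real assume "r > 0"
  \<comment> \<open>No kernel root lies in the annulus \<open>r0 \<le> |x| \<le> 1 / r0\<close>, which contains the circle \<open>|x| = r\<close>.\<close>
  define r0 where "r0 = min r (1 / r)"
  have r0: "0 < r0" "r0 \<le> r" "r \<le> 1 / r0"
    using \<open>r > 0\<close> by (auto simp: r0_def min_def field_simps)
  show "\<exists>\<epsilon>>0. \<forall>z. cmod z < \<epsilon> \<longrightarrow> (\<exists>us. walk_gf_identities r z us)"
  proof (intro exI[of _ "r0 ^ H / total_weight"] conjI allI impI)
    show "r0 ^ H / total_weight > 0"
      using r0 total_weight_pos by simp
    fix z :: complex assume "cmod z < r0 ^ H / total_weight"
    then have "norm z * total_weight < r0 ^ H"
      using total_weight_pos by (simp add: pos_less_divide_eq)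
    then show "\<exists>us. walk_gf_identities r z us"
      using expansion_at_0[OF \<open>r > 0\<close>] expansion_at_nonzero[OF _ r0] by (cases "z = 0") simp_all
  qed
qed

end

theorem theorem4p1:
  fixes S :: "int set" and p :: "int \<Rightarrow> real" and h :: int
  assumes "finite S" and "S \<noteq> {}"
    and "\<forall>s\<in>S. p s > 0"
    and "\<forall>u::complex. u \<noteq> 0 \<longrightarrow> stepP S p u = stepP S p (1 / u)"
    and "h = Max S" and "h \<ge> 1"
  shows "\<forall>r>0. \<exists>\<epsilon>>0. \<forall>z::complex. cmod z < \<epsilon> \<longrightarrow>
           (\<exists>us. mset us = roots_in_disk S p r z \<and> length us = nat h \<and>
              (\<lambda>k. Gf S p (int (Suc k)) z) sums (Mf S p z - 1) \<and>
              Mf S p z = (\<Prod>u\<leftarrow>us. 1 / (1 - u)) \<and>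
              (\<forall>k::nat. k \<ge> 1 \<longrightarrow> Gf S p (int k) z = hcomplete k us))"
proof -
  interpret symmetric_steps S p
  proof
    show "Max S \<ge> 1"
      using assms(5,6) by simp
  qed (fact assms)+
  show ?thesis
    using small_roots_expansion unfolding walk_gf_identities_def \<open>h = Max S\<close> .
qed

end
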